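(* Let $n\ge 3$, let $P(G(n))$ be the power graph of the gyrogroup $G(n)$ (defined in the context), and write $N=2^{n-1}$. Then (1) $dds(P(G(n)))=\big((1,2^n-1),\,(1,N-1,N)^{N-1},\,(1,1,2^n-2)^{N}\big)$, where $(1,2^n-1)$ is the distance degree sequence of $e$, $(1,N-1,N)$ that of each $u\in P(n)\setminus\{e\}$, and $(1,1,2^n-2)$ that of each $u\in H(n)$; (2) $dds_D(P(G(n)))=\big((1,N,\underbrace{0,\dots,0}_{N-3},N-1),\,(1,\underbrace{0,\dots,0}_{N-2},N-1,N)^{N-1},\,(1,1,N-1,\underbrace{0,\dots,0}_{N-3},N-1)^{N}\big)$, where the first sequence is the detour distance degree sequence of $e$, the second that of each $u\in P(n)\setminus\{e\}$, and the third that of each $u\in H(n)$.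
   Context: Let $n\ge 3$ be an integer and $m=2^{n-1}$. Let $P(n)=\{0,1,\dots,m-1\}$, $H(n)=\{m,m+1,\dots,2^n-1\}$ and $G(n)=P(n)\cup H(n)$. For $i,j\in G(n)$ let $t,s,k\in P(n)$ be the residues modulo $m$ (taken in $\{0,\dots,m-1\}$) of $i+j$, $i+(\frac m2-1)j$ and $(\frac m2+1)i+(\frac m2-1)j$, respectively, and define $i\oplus j=t$ if $i,j\in P(n)$; $i\oplus j=t+m$ if $i\in P(n),j\in H(n)$; $i\oplus j=s+m$ if $i\in H(n),j\in P(n)$; $i\oplus j=k$ if $i,j\in H(n)$. Then $(G(n),\oplus)$ is a gyrogroup with identity $e=0$. Powers are defined by $a^1=a$, $a^{k+1}=a^k\oplus a$. The power graph $P(G(n))$ is the simple undirected graph with vertex set $G(n)$ in which distinct vertices $u,v$ are adjacent if and only if $u^k=v$ or $v^k=u$ for some positive integer $k$. For a vertex $u$ of a connected graph, let $deg_k(u)$ (resp. $Deg_k(u)$) be the number of vertices at distance (resp. detour distance, i.e. length of a longest path) exactly $k$ from $u$. The distance degree sequence of $u$ is $dds(u)=(deg_0(u),deg_1(u),\dots,deg_{ec(u)}(u))$, where $ec(u)$ is the eccentricity, and the detour distance degree sequence is $dds_D(u)=(Deg_0(u),\dots,Deg_{ec_D(u)}(u))$, where $ec_D(u)$ is the detour eccentricity. $dds(G)$ (resp. $dds_D(G)$) is the collection of these sequences over all vertices; an exponent $s^{r}$ indicates the sequence $s$ occurs for $r$ vertices. *)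

theory Defs
  imports Main
begin

definition mm :: "nat \<Rightarrow> nat" where "mm n = 2 ^ (n - 1)"

definition Pn :: "nat \<Rightarrow> nat set" where "Pn n = {0..<mm n}"
definition Hn :: "nat \<Rightarrow> nat set" where "Hn n = {mm n..<2 ^ n}"
definition Gn :: "nat \<Rightarrow> nat set" where "Gn n = Pn n \<union> Hn n"

definition gop :: "nat \<Rightarrow> nat \<Rightarrow> nat \<Rightarrow> nat" where
  "gop n i j =
    (let m = mm n;
         t = (i + j) mod m;
         s = (i + (m div 2 - 1) * j) mod m;
         k = ((m div 2 + 1) * i + (m div 2 - 1) * j) mod m
     in if i \<in> Pn n \<and> j \<in> Pn n then t
        else if i \<in> Pn n \<and> j \<in> Hn n then t + m
        else if i \<in> Hn n \<and> j \<in> Pn n then s + m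
        else k)"

fun gpow :: "nat \<Rightarrow> nat \<Rightarrow> nat \<Rightarrow> nat" where
  "gpow n a 0 = 0"
| "gpow n a (Suc 0) = a"
| "gpow n a (Suc (Suc k)) = gop n (gpow n a (Suc k)) a"

definition padj :: "nat \<Rightarrow> nat \<Rightarrow> nat \<Rightarrow> bool" where
  "padj n u v \<longleftrightarrow> u \<in> Gn n \<and> v \<in> Gn n \<and> u \<noteq> v \<and>
     ((\<exists>k>0. gpow n u k = v) \<or> (\<exists>k>0. gpow n v k = u))"

definition is_path :: "nat \<Rightarrow> nat list \<Rightarrow> bool" where
  "is_path n xs \<longleftrightarrow> xs \<noteq> [] \<and> distinct xs \<and> set xs \<subseteq> Gn n \<and>
     (\<forall>i. Suc i < length xs \<longrightarrow> padj n (xs ! i) (xs ! Suc i))"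

definition path_lens :: "nat \<Rightarrow> nat \<Rightarrow> nat \<Rightarrow> nat set" where
  "path_lens n u v = {length xs - 1 | xs. is_path n xs \<and> hd xs = u \<and> last xs = v}"

definition gdist :: "nat \<Rightarrow> nat \<Rightarrow> nat \<Rightarrow> nat" where
  "gdist n u v = Min (path_lens n u v)"

definition ddist :: "nat \<Rightarrow> nat \<Rightarrow> nat \<Rightarrow> nat" where
  "ddist n u v = Max (path_lens n u v)"

definition ecc :: "nat \<Rightarrow> nat \<Rightarrow> nat" where
  "ecc n u = Max (gdist n u ` Gn n)"
definition ecc_D :: "nat \<Rightarrow> nat \<Rightarrow> nat" where
  "ecc_D n u = Max (ddist n u ` Gn n)"

definition deg_k :: "nat \<Rightarrow> nat \<Rightarrow> nat \<Rightarrow> nat" where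
  "deg_k n u k = card {v \<in> Gn n. gdist n u v = k}"
definition Deg_k :: "nat \<Rightarrow> nat \<Rightarrow> nat \<Rightarrow> nat" where
  "Deg_k n u k = card {v \<in> Gn n. ddist n u v = k}"

definition dds :: "nat \<Rightarrow> nat \<Rightarrow> nat list" where
  "dds n u = map (deg_k n u) [0..<Suc (ecc n u)]"
definition dds_D :: "nat \<Rightarrow> nat \<Rightarrow> nat list" where
  "dds_D n u = map (Deg_k n u) [0..<Suc (ecc_D n u)]"

end

theory Submission
  imports Defs "HOL-Number_Theory.Cong"
begin

text \<open>
  Write m = 2^(n-1). The powers of p \<in> P(n) are the multiples k p mod m, and every h \<in> H(n)
  satisfies h \<oplus> h = 0, so h^k is h or 0. In the cyclic group of 2-power order m, of any two
  elements one is a multiple of the other, hence P(n) spans a complete graph, while each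
  h \<in> H(n) is adjacent only to the identity 0: the power graph is the clique K_m with one
  pendant vertex attached to 0 for each element of H(n).

  Every vertex is adjacent to 0, so all distances are at most 2. For detours, a pendant vertex
  has a single neighbour, so it can only be an endpoint of a path; a path between two clique
  vertices therefore stays in the clique, and a Hamiltonian path of the clique is longest.
  A path leaving a pendant vertex must continue through 0, which gives the longest paths
  from a pendant vertex: length 1 to 0, 2 to another pendant vertex and m to the rest of
  the clique.
\<close>

section \<open>Arithmetic of the gyrogroup\<close>

lemma power_two_eq_double_mm: "n \<ge> 1 \<Longrightarrow> 2 ^ n = 2 * mm n"
  unfolding mm_def by (cases n) auto

lemma mm_ge_4: "n \<ge> 3 \<Longrightarrow> mm n \<ge> 4"
  unfolding mm_def using power_increasing[of 2 "n - 1" "2::nat"] by simp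

lemma even_mm: "n \<ge> 2 \<Longrightarrow> even (mm n)"
  unfolding mm_def by (cases "n - 1") auto

lemma Pn_eq: "Pn n = {..<mm n}"
  unfolding Pn_def by auto

lemma Hn_eq: "n \<ge> 1 \<Longrightarrow> Hn n = {mm n..<2 * mm n}"
  unfolding Hn_def by (simp add: power_two_eq_double_mm)

lemma Gn_eq: "n \<ge> 1 \<Longrightarrow> Gn n = {..<2 * mm n}"
  unfolding Gn_def Pn_eq by (auto simp: Hn_eq)

lemma gop_Pn_Pn: "i \<in> Pn n \<Longrightarrow> j \<in> Pn n \<Longrightarrow> gop n i j = (i + j) mod mm n"
  unfolding gop_def by (simp add: Let_def)

lemma gop_zero_Hn: assumes "h \<in> Hn n" shows "gop n 0 h = h"
proof -
  have "n \<ge> 1" using assms by (cases n) (simp_all add: Hn_def mm_def)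
  then have "0 \<in> Pn n" "h \<notin> Pn n" "mm n \<le> h" "h < 2 * mm n"
    using assms by (auto simp: Pn_eq Hn_eq mm_def)
  then show ?thesis using assms unfolding gop_def by (simp add: Let_def le_mod_geq)
qed

lemma gop_Hn_self: assumes "n \<ge> 2" "h \<in> Hn n" shows "gop n h h = 0"
proof -
  obtain a where a: "mm n = 2 * a" using even_mm[OF assms(1)] by blast
  moreover have "mm n > 0" by (simp add: mm_def)
  ultimately have "(mm n div 2 + 1) + (mm n div 2 - 1) = mm n" by simp
  then have "(mm n div 2 + 1) * h + (mm n div 2 - 1) * h = mm n * h"
    by (metis add_mult_distrib)
  moreover have "h \<notin> Pn n" using assms by (simp add: Pn_eq Hn_eq)
  ultimately show ?thesis unfolding gop_def by (simp add: Let_def)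
qed

lemma gpow_Pn: assumes "p \<in> Pn n" "k > 0" shows "gpow n p k = (k * p) mod mm n"
  using assms(2)
proof (induction k rule: nat_induct_non_zero)
  case 1
  then show ?case using assms(1) by (simp add: Pn_eq)
next
  case (Suc k)
  then obtain j where "k = Suc j" by (cases k) auto
  then have "gpow n p (Suc k) = gop n ((k * p) mod mm n) p" using Suc by simp
  also have "\<dots> = (Suc k * p) mod mm n"
    using assms(1) by (simp add: gop_Pn_Pn Pn_eq ac_simps mod_add_right_eq)
  finally show ?case .
qed

lemma gpow_Hn: assumes "n \<ge> 2" "h \<in> Hn n" "k > 0" shows "gpow n h k = (if odd k then h else 0)"
  using assms(3)
proof (induction k rule: nat_induct_non_zero)
  case (Suc k)
  then obtain j where "k = Suc j" by (cases k) auto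
  then show ?case using Suc gop_Hn_self[OF assms(1,2)] gop_zero_Hn[OF assms(2)] by auto
qed simp

section \<open>Adjacency in the power graph\<close>

lemma mod_multiple_if_gcd_dvd:
  fixes m u v :: nat
  assumes "m > 0" "v < m" "gcd u m dvd v"
  shows "\<exists>k>0. (k * u) mod m = v"
proof -
  obtain x where "[u * x = v] (mod m)" using cong_solve_dvd_nat[OF assms(3)] by blast
  then have "((x + m) * u) mod m = v" using assms(2) by (simp add: cong_def algebra_simps)
  then show ?thesis using assms(1) by (intro exI[of _ "x + m"]) simp
qed

text \<open>The gcds with a power of two are powers of two, hence comparable under divisibility.\<close>
lemma power_of_two_mod_multiple:
  fixes m u v :: nat
  assumes "m = 2 ^ r" "u < m" "v < m"
  shows "(\<exists>k>0. (k * u) mod m = v) \<or> (\<exists>k>0. (k * v) mod m = u)"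
proof -
  obtain a b where "gcd u m = 2 ^ a" "gcd v m = 2 ^ b"
    using divides_primepow_nat[OF two_is_prime_nat] assms(1) by (metis gcd_dvd2)
  then have "gcd u m dvd v \<or> gcd v m dvd u"
    by (metis gcd_dvd1 le_imp_power_dvd nat_le_linear dvd_trans)
  then show ?thesis using mod_multiple_if_gcd_dvd assms by auto
qed

lemma gpow_ne_self:
  assumes "n \<ge> 2" "u \<in> Gn n" "k > 0" "gpow n u k \<noteq> u"
  shows "(u \<in> Pn n \<and> gpow n u k \<in> Pn n) \<or> gpow n u k = 0"
proof (cases "u \<in> Pn n")
  case True
  then show ?thesis using gpow_Pn[OF True assms(3)] by (simp add: Pn_eq mm_def)
next
  case False
  then have "u \<in> Hn n" using assms(2) by (simp add: Gn_def)
  then show ?thesis using gpow_Hn[OF assms(1) _ assms(3)] assms(4) by auto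
qed

lemma padj_iff:
  assumes "n \<ge> 2"
  shows "padj n u v \<longleftrightarrow>
    u \<in> Gn n \<and> v \<in> Gn n \<and> u \<noteq> v \<and> ((u \<in> Pn n \<and> v \<in> Pn n) \<or> u = 0 \<or> v = 0)"
proof
  assume "padj n u v"
  then show "u \<in> Gn n \<and> v \<in> Gn n \<and> u \<noteq> v \<and> ((u \<in> Pn n \<and> v \<in> Pn n) \<or> u = 0 \<or> v = 0)"
    unfolding padj_def using gpow_ne_self[OF assms, of u] gpow_ne_self[OF assms, of v] by metis
next
  assume uv: "u \<in> Gn n \<and> v \<in> Gn n \<and> u \<noteq> v \<and> ((u \<in> Pn n \<and> v \<in> Pn n) \<or> u = 0 \<or> v = 0)"
  have "(\<exists>k>0. gpow n u k = v) \<or> (\<exists>k>0. gpow n v k = u)"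
  proof (cases "u \<in> Pn n \<and> v \<in> Pn n")
    case True
    then show ?thesis
      using power_of_two_mod_multiple[OF mm_def, of u n v] gpow_Pn by (auto simp: Pn_eq)
  next
    case False
    then have "(u = 0 \<and> v \<in> Hn n) \<or> (v = 0 \<and> u \<in> Hn n)"
      using uv by (auto simp: Gn_def Pn_eq mm_def)
    then have "gpow n v 2 = u \<or> gpow n u 2 = v" using gpow_Hn[OF assms] by fastforce
    then show ?thesis by (metis zero_less_numeral)
  qed
  then show "padj n u v" using uv unfolding padj_def by blast
qed

section \<open>Simple paths and distance histograms\<close>

definition simple_path :: "'a set \<Rightarrow> ('a \<Rightarrow> 'a \<Rightarrow> bool) \<Rightarrow> 'a list \<Rightarrow> bool" where
  "simple_path V adj xs \<longleftrightarrow> xs \<noteq> [] \<and> distinct xs \<and> set xs \<subseteq> V \<and> successively adj xs"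

definition path_lengths :: "'a set \<Rightarrow> ('a \<Rightarrow> 'a \<Rightarrow> bool) \<Rightarrow> 'a \<Rightarrow> 'a \<Rightarrow> nat set" where
  "path_lengths V adj u v =
    {length xs - 1 | xs. simple_path V adj xs \<and> hd xs = u \<and> last xs = v}"

lemma path_lengthsI:
  assumes "simple_path V adj xs" "hd xs = u" "last xs = v" "length xs = Suc l"
  shows "l \<in> path_lengths V adj u v"
  using assms unfolding path_lengths_def by force

lemma path_lengthsE:
  assumes "l \<in> path_lengths V adj u v"
  obtains xs where "simple_path V adj xs" "hd xs = u" "last xs = v" "length xs = Suc l"
  using assms unfolding path_lengths_def simple_path_def by fastforce

lemma simple_path_rev:
  assumes "symp adj"
  shows "simple_path V adj (rev xs) \<longleftrightarrow> simple_path V adj xs"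
proof -
  have converse: "(\<lambda>x y. adj y x) = adj" using assms by (auto dest: sympD)
  show ?thesis unfolding simple_path_def successively_rev converse by simp
qed

lemma path_lengths_commute:
  assumes "symp adj"
  shows "path_lengths V adj u v = path_lengths V adj v u"
proof -
  have "path_lengths V adj u v \<subseteq> path_lengths V adj v u" for u v
  proof
    fix l assume "l \<in> path_lengths V adj u v"
    then obtain xs where xs: "simple_path V adj xs" "hd xs = u" "last xs = v" "length xs = Suc l"
      by (rule path_lengthsE)
    then have "simple_path V adj (rev xs)" "hd (rev xs) = v" "last (rev xs) = u"
      using simple_path_rev[OF assms] by (auto simp: hd_rev last_rev)
    then show "l \<in> path_lengths V adj v u" using path_lengthsI[of V adj "rev xs" v u l] xs(4) by simp
  qed
  then show ?thesis by blast
qed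

lemma length_simple_path_gt_1:
  "simple_path V adj xs \<Longrightarrow> hd xs \<noteq> last xs \<Longrightarrow> 1 < length xs"
  unfolding simple_path_def by (cases xs) (auto split: if_splits)

lemma length_simple_path_le_card:
  "finite V \<Longrightarrow> simple_path V adj xs \<Longrightarrow> length xs \<le> card V"
  unfolding simple_path_def by (metis card_mono distinct_card)

lemma finite_path_lengths: "finite V \<Longrightarrow> finite (path_lengths V adj u v)"
  by (rule finite_subset[of _ "{..card V}"])
    (auto elim!: path_lengthsE dest: length_simple_path_le_card)

lemma path_lengths_refl: assumes "u \<in> V" shows "path_lengths V adj u u = {0}"
proof -
  have "l = 0" if l: "l \<in> path_lengths V adj u u" for l
  proof -
    obtain xs where xs: "simple_path V adj xs" "hd xs = u" "last xs = u" "length xs = Suc l"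
      using l by (rule path_lengthsE)
    then have "xs ! 0 = xs ! l" "distinct xs" "xs \<noteq> []"
      by (auto simp: hd_conv_nth last_conv_nth simple_path_def)
    then show ?thesis using xs(4) by (simp add: nth_eq_iff_index_eq)
  qed
  moreover have "simple_path V adj [u]" using assms by (simp add: simple_path_def)
  ultimately show ?thesis using path_lengthsI[of V adj "[u]"] by fastforce
qed

lemma path_lengths_ge_1:
  assumes "l \<in> path_lengths V adj u v" "u \<noteq> v"
  shows "l \<ge> 1"
proof -
  obtain xs where "simple_path V adj xs" "hd xs = u" "last xs = v" "length xs = Suc l"
    using assms(1) by (rule path_lengthsE)
  then show ?thesis using assms(2) by (cases xs) (auto simp: Suc_le_eq split: if_splits)
qed

lemma one_in_path_lengths_iff:
  "1 \<in> path_lengths V adj u v \<longleftrightarrow> u \<in> V \<and> v \<in> V \<and> u \<noteq> v \<and> adj u v"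
proof
  assume "1 \<in> path_lengths V adj u v"
  then obtain xs where xs: "simple_path V adj xs" "hd xs = u" "last xs = v" "length xs = 2"
    by (auto elim!: path_lengthsE)
  then obtain a b where "xs = [a, b]" by (auto simp: numeral_2_eq_2 length_Suc_conv)
  then show "u \<in> V \<and> v \<in> V \<and> u \<noteq> v \<and> adj u v" using xs by (auto simp: simple_path_def)
next
  assume "u \<in> V \<and> v \<in> V \<and> u \<noteq> v \<and> adj u v"
  then show "1 \<in> path_lengths V adj u v"
    by (intro path_lengthsI[of V adj "[u, v]"]) (auto simp: simple_path_def)
qed

lemma Min_path_lengths:
  assumes "finite V" "u \<in> V" "v \<in> V" "u \<noteq> v"
    and "adj u v \<or> (\<exists>w\<in>V. w \<noteq> u \<and> w \<noteq> v \<and> adj u w \<and> adj w v)"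
  shows "Min (path_lengths V adj u v) = (if adj u v then 1 else 2)"
proof (cases "adj u v")
  case True
  then have one: "1 \<in> path_lengths V adj u v" using assms by (subst one_in_path_lengths_iff) simp
  have "1 \<le> l" if "l \<in> path_lengths V adj u v" for l
    using path_lengths_ge_1[OF that assms(4)] .
  then show ?thesis using True Min_eqI[OF finite_path_lengths[OF assms(1)] _ one] by presburger
next
  case False
  then obtain w where w: "w \<in> V" "w \<noteq> u" "w \<noteq> v" "adj u w" "adj w v" using assms(5) by blast
  then have two: "2 \<in> path_lengths V adj u v"
    using assms by (intro path_lengthsI[of V adj "[u, w, v]"]) (auto simp: simple_path_def)
  have "2 \<le> l" if l: "l \<in> path_lengths V adj u v" for l
  proof -
    have "l \<noteq> 1" using l False one_in_path_lengths_iff[of V adj u v] by auto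
    then show ?thesis using path_lengths_ge_1[OF l assms(4)] by simp
  qed
  then show ?thesis using False Min_eqI[OF finite_path_lengths[OF assms(1)] _ two] by presburger
qed

definition histogram :: "('a \<Rightarrow> nat) \<Rightarrow> 'a set \<Rightarrow> nat list" where
  "histogram f V = map (\<lambda>k. card {v \<in> V. f v = k}) [0..<Suc (Max (f ` V))]"

lemma histogram_cong:
  assumes "\<And>v. v \<in> V \<Longrightarrow> f v = g v"
  shows "histogram f V = histogram g V"
proof -
  have "f ` V = g ` V" using assms by (rule image_cong[OF refl])
  moreover have "{v \<in> V. f v = k} = {v \<in> V. g v = k}" for k using assms by auto
  ultimately show ?thesis unfolding histogram_def by simp
qed

lemma histogram_eqI:
  assumes "finite V" "L \<noteq> []" "last L \<noteq> 0" "\<And>v. v \<in> V \<Longrightarrow> f v < length L"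
    and "\<And>k. k < length L \<Longrightarrow> card {v \<in> V. f v = k} = L ! k"
  shows "histogram f V = L"
proof -
  have "card {v \<in> V. f v = length L - 1} \<noteq> 0" using assms(2,3,5) by (simp add: last_conv_nth)
  then have "{v \<in> V. f v = length L - 1} \<noteq> {}" by (metis card.empty)
  then obtain w where "w \<in> V" "f w = length L - 1" by blast
  moreover have "f v \<le> length L - 1" if "v \<in> V" for v using assms(4)[OF that] by simp
  ultimately have "Max (f ` V) = length L - 1" using assms(1) by (intro Max_eqI) (auto intro: rev_image_eqI)
  then show ?thesis unfolding histogram_def using assms(2,5) by (intro nth_equalityI) auto
qed

section \<open>A clique with pendant vertices at one vertex\<close>

definition pendant_clique_adj :: "nat \<Rightarrow> nat \<Rightarrow> nat \<Rightarrow> bool" where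
  "pendant_clique_adj m u v \<longleftrightarrow>
    u < 2 * m \<and> v < 2 * m \<and> u \<noteq> v \<and> ((u < m \<and> v < m) \<or> u = 0 \<or> v = 0)"

abbreviation pendant_clique_path :: "nat \<Rightarrow> nat list \<Rightarrow> bool" where
  "pendant_clique_path m \<equiv> simple_path {..<2 * m} (pendant_clique_adj m)"

abbreviation pendant_clique_lengths :: "nat \<Rightarrow> nat \<Rightarrow> nat \<Rightarrow> nat set" where
  "pendant_clique_lengths m \<equiv> path_lengths {..<2 * m} (pendant_clique_adj m)"

lemma symp_pendant_clique_adj: "symp (pendant_clique_adj m)"
  unfolding pendant_clique_adj_def by (auto intro: sympI)

lemma pendant_clique_path_adj:
  "pendant_clique_path m xs \<Longrightarrow> Suc i < length xs \<Longrightarrow> pendant_clique_adj m (xs ! i) (xs ! Suc i)"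
  unfolding simple_path_def by (simp add: successively_nth)

text \<open>A pendant vertex has the single neighbour 0, so it cannot sit between two distinct vertices.\<close>
lemma pendant_clique_path_interior:
  assumes "pendant_clique_path m xs" "0 < i" "Suc i < length xs"
  shows "xs ! i < m"
proof (rule ccontr)
  assume "\<not> xs ! i < m"
  moreover obtain j where j: "i = Suc j" using assms(2) by (cases i) auto
  ultimately have "xs ! j = 0" "xs ! Suc i = 0"
    using pendant_clique_path_adj[OF assms(1), of j] pendant_clique_path_adj[OF assms(1), of i] assms(3)
    by (auto simp: pendant_clique_adj_def)
  moreover have "distinct xs" using assms(1) by (simp add: simple_path_def)
  ultimately have "j = Suc i" using nth_eq_iff_index_eq[of xs j "Suc i"] assms(3) j by simp
  then show False using j by simp
qed

lemma pendant_clique_path_second: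
  assumes "pendant_clique_path m xs" "m \<le> hd xs" "1 < length xs"
  shows "xs ! 1 = 0"
proof -
  have "hd xs = xs ! 0" using assms(3) by (cases xs) auto
  then show ?thesis using pendant_clique_path_adj[OF assms(1), of 0] assms(2,3)
    by (auto simp: pendant_clique_adj_def)
qed

lemma set_pendant_clique_path:
  assumes "pendant_clique_path m xs"
  shows "set xs \<subseteq> {hd xs, last xs} \<union> {..<m}"
proof
  fix x assume "x \<in> set xs"
  then obtain i where i: "i < length xs" "x = xs ! i" by (auto simp: in_set_conv_nth)
  then have "xs \<noteq> []" by auto
  consider "i = 0" | "i = length xs - 1" | "0 < i \<and> Suc i < length xs" using i(1) by linarith
  then show "x \<in> {hd xs, last xs} \<union> {..<m}"
  proof cases
    case 1 then show ?thesis using i by (simp add: hd_conv_nth)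
  next
    case 2 then show ?thesis using i \<open>xs \<noteq> []\<close> by (simp add: last_conv_nth)
  next
    case 3 then show ?thesis using i pendant_clique_path_interior[OF assms, of i] by simp
  qed
qed

lemma length_pendant_clique_path_le:
  assumes "pendant_clique_path m xs"
  shows "length xs \<le> card ({hd xs, last xs} \<union> {..<m})"
proof -
  have "length xs = card (set xs)" using assms by (simp add: simple_path_def distinct_card)
  then show ?thesis using set_pendant_clique_path[OF assms] by (simp add: card_mono)
qed

lemma pendant_clique_path_pendant_hub:
  assumes "pendant_clique_path m xs" "m \<le> hd xs" "last xs = 0"
  shows "length xs = 2"
proof -
  have "xs \<noteq> []" "distinct xs" "set xs \<subseteq> {..<2 * m}" using assms(1) by (auto simp: simple_path_def)
  then have "hd xs \<in> {..<2 * m}" using hd_in_set by blast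
  then have "0 < m" by simp
  then have l: "1 < length xs" using assms length_simple_path_gt_1 by fastforce
  have "xs ! 1 = xs ! (length xs - 1)"
    using pendant_clique_path_second[OF assms(1,2) l] assms(3) \<open>xs \<noteq> []\<close> by (simp add: last_conv_nth)
  moreover have "length xs - 1 < length xs" using l by simp
  ultimately have "1 = length xs - 1" using nth_eq_iff_index_eq[OF \<open>distinct xs\<close> l] by blast
  then show ?thesis by simp
qed

lemma pendant_clique_path_pendant_pendant:
  assumes "pendant_clique_path m xs" "m \<le> hd xs" "m \<le> last xs" "hd xs \<noteq> last xs"
  shows "length xs = 3"
proof -
  have l: "1 < length xs" using assms(1,4) by (rule length_simple_path_gt_1)
  have "pendant_clique_path m (rev xs)" using assms(1) simple_path_rev[OF symp_pendant_clique_adj] by simp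
  then have "rev xs ! 1 = 0" using pendant_clique_path_second assms(3) l by (simp add: hd_rev)
  then have "xs ! 1 = xs ! (length xs - 2)"
    using pendant_clique_path_second[OF assms(1,2) l] l by (simp add: rev_nth numeral_2_eq_2)
  moreover have "distinct xs" using assms(1) by (simp add: simple_path_def)
  moreover have "length xs - 2 < length xs" using l by simp
  ultimately have "1 = length xs - 2" using nth_eq_iff_index_eq[of xs 1 "length xs - 2"] l by blast
  then show ?thesis by simp
qed

lemma successively_pendant_clique_adj_clique:
  assumes "distinct xs" "set xs \<subseteq> {..<m}"
  shows "successively (pendant_clique_adj m) xs"
  unfolding successively_conv_nth
proof (intro allI impI)
  fix i assume i: "Suc i < length xs"
  then have "xs ! i \<noteq> xs ! Suc i" using assms(1) by (simp add: nth_eq_iff_index_eq)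
  moreover have "xs ! i \<in> set xs" "xs ! Suc i \<in> set xs" using i by simp_all
  ultimately show "pendant_clique_adj m (xs ! i) (xs ! Suc i)"
    using assms(2) by (auto simp: pendant_clique_adj_def)
qed

lemma pendant_clique_hamiltonian_path:
  assumes "u < m" "v < m" "u \<noteq> v"
  obtains xs where "pendant_clique_path m xs" "hd xs = u" "last xs = v"
    "set xs = {..<m}" "length xs = m"
proof
  let ?xs = "u # filter (\<lambda>x. x \<noteq> u \<and> x \<noteq> v) [0..<m] @ [v]"
  have dist: "distinct ?xs" using assms by auto
  show set: "set ?xs = {..<m}" using assms by auto
  then show "pendant_clique_path m ?xs"
    using successively_pendant_clique_adj_clique[OF dist] dist by (auto simp: simple_path_def)
  show "length ?xs = m" using set dist distinct_card by fastforce
qed simp_all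

lemma Min_pendant_clique_lengths:
  assumes "0 < m" "u < 2 * m" "v < 2 * m"
  shows "Min (pendant_clique_lengths m u v) =
    (if u = v then 0 else if pendant_clique_adj m u v then 1 else 2)"
proof (cases "u = v")
  case True
  then show ?thesis using assms by (simp add: path_lengths_refl)
next
  case False
  have "pendant_clique_adj m u v \<or>
    (\<exists>w\<in>{..<2 * m}. w \<noteq> u \<and> w \<noteq> v \<and> pendant_clique_adj m u w \<and> pendant_clique_adj m w v)"
    using assms False by (cases "u = 0 \<or> v = 0") (auto simp: pendant_clique_adj_def intro!: bexI[of _ 0])
  then show ?thesis using Min_path_lengths[of "{..<2 * m}" u v] assms False by simp
qed

lemma Max_pendant_clique_lengths_clique:
  assumes "u < m" "v < m" "u \<noteq> v"
  shows "Max (pendant_clique_lengths m u v) = m - 1"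
proof (rule Max_eqI)
  fix l assume "l \<in> pendant_clique_lengths m u v"
  then obtain xs where "pendant_clique_path m xs" "hd xs = u" "last xs = v" "length xs = Suc l"
    by (rule path_lengthsE)
  moreover have "{u, v} \<union> {..<m} = {..<m}" using assms by auto
  ultimately show "l \<le> m - 1" using length_pendant_clique_path_le[of m xs] by simp
next
  obtain xs where "pendant_clique_path m xs" "hd xs = u" "last xs = v" "length xs = m"
    using pendant_clique_hamiltonian_path[OF assms] .
  then show "m - 1 \<in> pendant_clique_lengths m u v" using assms by (intro path_lengthsI) auto
qed (rule finite_path_lengths, simp)

lemma Max_pendant_clique_lengths_pendant_hub:
  assumes "m \<le> u" "u < 2 * m"
  shows "Max (pendant_clique_lengths m u 0) = 1"
proof (rule Max_eqI)
  fix l assume "l \<in> pendant_clique_lengths m u 0"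
  then obtain xs where "pendant_clique_path m xs" "hd xs = u" "last xs = 0" "length xs = Suc l"
    by (rule path_lengthsE)
  then show "l \<le> 1" using pendant_clique_path_pendant_hub[of m xs] assms by simp
next
  show "1 \<in> pendant_clique_lengths m u 0"
    using assms by (intro one_in_path_lengths_iff[THEN iffD2]) (auto simp: pendant_clique_adj_def)
qed (rule finite_path_lengths, simp)

lemma Max_pendant_clique_lengths_pendant_clique:
  assumes "m \<le> u" "u < 2 * m" "0 < v" "v < m"
  shows "Max (pendant_clique_lengths m u v) = m"
proof (rule Max_eqI)
  fix l assume "l \<in> pendant_clique_lengths m u v"
  then obtain xs where "pendant_clique_path m xs" "hd xs = u" "last xs = v" "length xs = Suc l"
    by (rule path_lengthsE)
  moreover have "{u, v} \<union> {..<m} = insert u {..<m}" using assms by auto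
  ultimately show "l \<le> m" using length_pendant_clique_path_le[of m xs] assms by simp
next
  have "0 < m" "0 \<noteq> v" using assms by simp_all
  then obtain xs where xs: "pendant_clique_path m xs" "hd xs = 0" "last xs = v"
    "set xs = {..<m}" "length xs = m"
    using pendant_clique_hamiltonian_path[of 0 m v] assms(4) by blast
  have "pendant_clique_adj m u 0" using assms by (simp add: pendant_clique_adj_def)
  then have "successively (pendant_clique_adj m) (u # xs)"
    using xs(1,2) by (simp add: successively_Cons simple_path_def)
  moreover have "u \<notin> set xs" using xs(4) assms(1) by auto
  ultimately have path: "pendant_clique_path m (u # xs)" using xs(1) assms(2) by (simp add: simple_path_def)
  have "xs \<noteq> []" using xs(1) by (simp add: simple_path_def)
  then show "m \<in> pendant_clique_lengths m u v" using xs(3,5) by (intro path_lengthsI[OF path]) auto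
qed (rule finite_path_lengths, simp)

lemma Max_pendant_clique_lengths_pendant_pendant:
  assumes "m \<le> u" "u < 2 * m" "m \<le> v" "v < 2 * m" "u \<noteq> v"
  shows "Max (pendant_clique_lengths m u v) = 2"
proof (rule Max_eqI)
  fix l assume "l \<in> pendant_clique_lengths m u v"
  then obtain xs where "pendant_clique_path m xs" "hd xs = u" "last xs = v" "length xs = Suc l"
    by (rule path_lengthsE)
  then show "l \<le> 2" using pendant_clique_path_pendant_pendant[of m xs] assms by simp
next
  show "2 \<in> pendant_clique_lengths m u v"
    using assms by (intro path_lengthsI[of _ _ "[u, 0, v]"]) (auto simp: simple_path_def pendant_clique_adj_def)
qed (rule finite_path_lengths, simp)

lemma Min_pendant_clique_lengths_from_hub:
  assumes "v < 2 * m"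
  shows "Min (pendant_clique_lengths m 0 v) = (if v = 0 then 0 else 1)"
  using assms Min_pendant_clique_lengths[of m 0 v] by (simp add: pendant_clique_adj_def)

lemma Min_pendant_clique_lengths_from_clique:
  assumes "0 < u" "u < m" "v < 2 * m"
  shows "Min (pendant_clique_lengths m u v) = (if v = u then 0 else if v < m then 1 else 2)"
  using assms Min_pendant_clique_lengths[of m u v] by (simp add: pendant_clique_adj_def)

lemma Min_pendant_clique_lengths_from_pendant:
  assumes "m \<le> u" "u < 2 * m" "v < 2 * m"
  shows "Min (pendant_clique_lengths m u v) = (if v = u then 0 else if v = 0 then 1 else 2)"
  using assms Min_pendant_clique_lengths[of m u v] by (simp add: pendant_clique_adj_def)

lemma Max_pendant_clique_lengths_from_pendant:
  assumes "m \<le> u" "u < 2 * m" "v < 2 * m"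
  shows "Max (pendant_clique_lengths m u v) = (if v = u then 0 else if v = 0 then 1 else if v < m then m else 2)"
proof -
  consider "v = u" | "v = 0" | "0 < v \<and> v < m" | "m \<le> v \<and> v \<noteq> u" by linarith
  then show ?thesis
  proof cases
    case 1 then show ?thesis using assms(2) by (simp add: path_lengths_refl)
  next
    case 2 then show ?thesis using assms Max_pendant_clique_lengths_pendant_hub by simp
  next
    case 3 then show ?thesis using assms Max_pendant_clique_lengths_pendant_clique by simp
  next
    case 4 then show ?thesis using assms Max_pendant_clique_lengths_pendant_pendant by simp
  qed
qed

lemma Max_pendant_clique_lengths_from_hub:
  assumes "v < 2 * m"
  shows "Max (pendant_clique_lengths m 0 v) = (if v = 0 then 0 else if v < m then m - 1 else 1)"
proof -
  consider "v = 0" | "0 < v \<and> v < m" | "m \<le> v" by linarith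
  then show ?thesis
  proof cases
    case 1 then show ?thesis using assms by (simp add: path_lengths_refl)
  next
    case 2 then show ?thesis using Max_pendant_clique_lengths_clique[of 0 m v] by simp
  next
    case 3 then show ?thesis using assms Max_pendant_clique_lengths_pendant_hub[of m v]
      by (simp add: path_lengths_commute[OF symp_pendant_clique_adj])
  qed
qed

lemma Max_pendant_clique_lengths_from_clique:
  assumes "0 < u" "u < m" "v < 2 * m"
  shows "Max (pendant_clique_lengths m u v) = (if v = u then 0 else if v < m then m - 1 else m)"
proof -
  consider "v = u" | "v < m \<and> v \<noteq> u" | "m \<le> v" by linarith
  then show ?thesis
  proof cases
    case 1 then show ?thesis using assms by (simp add: path_lengths_refl)
  next
    case 2 then show ?thesis using assms Max_pendant_clique_lengths_clique[of u m v] by simp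
  next
    case 3 then show ?thesis using assms Max_pendant_clique_lengths_pendant_clique[of m v u]
      by (simp add: path_lengths_commute[OF symp_pendant_clique_adj])
  qed
qed

lemma histogram_Min_pendant_clique_hub:
  assumes "0 < m"
  shows "histogram (\<lambda>v. Min (pendant_clique_lengths m 0 v)) {..<2 * m} = [1, 2 * m - 1]"
    (is "_ = ?L")
proof -
  let ?f = "\<lambda>v. if v = 0 then 0 else 1"
  have "histogram (\<lambda>v. Min (pendant_clique_lengths m 0 v)) {..<2 * m} = histogram ?f {..<2 * m}"
    by (intro histogram_cong) (simp add: Min_pendant_clique_lengths_from_hub)
  also have "\<dots> = ?L"
  proof (rule histogram_eqI)
    fix k assume k: "k < length ?L"
    have "{v \<in> {..<2 * m}. ?f v = k} = (if k = 0 then {0} else {1..<2 * m})"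
      using assms k by auto
    then show "card {v \<in> {..<2 * m}. ?f v = k} = ?L ! k" using k by (auto simp: nth_Cons')
  qed (use assms in auto)
  finally show ?thesis .
qed

lemma histogram_Min_pendant_clique_clique:
  assumes "0 < u" "u < m"
  shows "histogram (\<lambda>v. Min (pendant_clique_lengths m u v)) {..<2 * m} = [1, m - 1, m]"
    (is "_ = ?L")
proof -
  let ?f = "\<lambda>v. if v = u then 0 else if v < m then 1 else 2"
  have "histogram (\<lambda>v. Min (pendant_clique_lengths m u v)) {..<2 * m} = histogram ?f {..<2 * m}"
    using assms by (intro histogram_cong) (simp add: Min_pendant_clique_lengths_from_clique)
  also have "\<dots> = ?L"
  proof (rule histogram_eqI)
    fix k assume k: "k < length ?L"
    have "{v \<in> {..<2 * m}. ?f v = k} =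
      (if k = 0 then {u} else if k = 1 then {..<m} - {u} else {m..<2 * m})"
      using assms k by auto
    then show "card {v \<in> {..<2 * m}. ?f v = k} = ?L ! k" using assms k by (auto simp: nth_Cons')
  qed (use assms in auto)
  finally show ?thesis .
qed

lemma histogram_Min_pendant_clique_pendant:
  assumes "2 \<le> m" "m \<le> u" "u < 2 * m"
  shows "histogram (\<lambda>v. Min (pendant_clique_lengths m u v)) {..<2 * m} = [1, 1, 2 * m - 2]"
    (is "_ = ?L")
proof -
  let ?f = "\<lambda>v. if v = u then 0 else if v = 0 then 1 else 2"
  have "histogram (\<lambda>v. Min (pendant_clique_lengths m u v)) {..<2 * m} = histogram ?f {..<2 * m}"
    using assms by (intro histogram_cong) (simp add: Min_pendant_clique_lengths_from_pendant)
  also have "\<dots> = ?L"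
  proof (rule histogram_eqI)
    fix k assume k: "k < length ?L"
    have "{v \<in> {..<2 * m}. ?f v = k} =
      (if k = 0 then {u} else if k = 1 then {0} else {..<2 * m} - {0, u})"
      using assms k by auto
    moreover have "card ({..<2 * m} - {0, u}) = 2 * m - 2" using assms by (simp add: card_Diff_subset)
    ultimately show "card {v \<in> {..<2 * m}. ?f v = k} = ?L ! k" using k by (simp add: nth_Cons')
  qed (use assms in auto)
  finally show ?thesis .
qed

lemma histogram_Max_pendant_clique_hub:
  assumes "3 \<le> m"
  shows "histogram (\<lambda>v. Max (pendant_clique_lengths m 0 v)) {..<2 * m} =
    [1, m] @ replicate (m - 3) 0 @ [m - 1]" (is "_ = ?L")
proof -
  let ?f = "\<lambda>v. if v = 0 then 0 else if v < m then m - 1 else 1"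
  have "histogram (\<lambda>v. Max (pendant_clique_lengths m 0 v)) {..<2 * m} = histogram ?f {..<2 * m}"
    by (intro histogram_cong) (simp add: Max_pendant_clique_lengths_from_hub)
  also have "\<dots> = ?L"
  proof (rule histogram_eqI)
    fix k assume k: "k < length ?L"
    have "{v \<in> {..<2 * m}. ?f v = k} =
      (if k = 0 then {0} else if k = 1 then {m..<2 * m} else if k = m - 1 then {1..<m} else {})"
      using assms by auto
    then have "card {v \<in> {..<2 * m}. ?f v = k} =
      (if k = 0 then 1 else if k = 1 then m else if k = m - 1 then m - 1 else 0)"
      using assms by simp
    also have "\<dots> = ?L ! k" using assms k by (auto simp: nth_append nth_Cons')
    finally show "card {v \<in> {..<2 * m}. ?f v = k} = ?L ! k" .
  qed (use assms in auto)
  finally show ?thesis .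
qed

lemma histogram_Max_pendant_clique_clique:
  assumes "3 \<le> m" "0 < u" "u < m"
  shows "histogram (\<lambda>v. Max (pendant_clique_lengths m u v)) {..<2 * m} =
    [1] @ replicate (m - 2) 0 @ [m - 1, m]" (is "_ = ?L")
proof -
  let ?f = "\<lambda>v. if v = u then 0 else if v < m then m - 1 else m"
  have "histogram (\<lambda>v. Max (pendant_clique_lengths m u v)) {..<2 * m} = histogram ?f {..<2 * m}"
    using assms by (intro histogram_cong) (simp add: Max_pendant_clique_lengths_from_clique)
  also have "\<dots> = ?L"
  proof (rule histogram_eqI)
    fix k assume k: "k < length ?L"
    have "{v \<in> {..<2 * m}. ?f v = k} =
      (if k = 0 then {u} else if k = m - 1 then {..<m} - {u} else if k = m then {m..<2 * m} else {})"
      using assms by auto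
    then have "card {v \<in> {..<2 * m}. ?f v = k} =
      (if k = 0 then 1 else if k = m - 1 then m - 1 else if k = m then m else 0)"
      using assms by simp
    also have "\<dots> = ?L ! k" using assms k by (auto simp: nth_append nth_Cons')
    finally show "card {v \<in> {..<2 * m}. ?f v = k} = ?L ! k" .
  qed (use assms in auto)
  finally show ?thesis .
qed

lemma histogram_Max_pendant_clique_pendant:
  assumes "3 \<le> m" "m \<le> u" "u < 2 * m"
  shows "histogram (\<lambda>v. Max (pendant_clique_lengths m u v)) {..<2 * m} =
    [1, 1, m - 1] @ replicate (m - 3) 0 @ [m - 1]" (is "_ = ?L")
proof -
  let ?f = "\<lambda>v. if v = u then 0 else if v = 0 then 1 else if v < m then m else 2"
  have "histogram (\<lambda>v. Max (pendant_clique_lengths m u v)) {..<2 * m} = histogram ?f {..<2 * m}"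
    using assms by (intro histogram_cong) (simp add: Max_pendant_clique_lengths_from_pendant)
  also have "\<dots> = ?L"
  proof (rule histogram_eqI)
    fix k assume k: "k < length ?L"
    have "{v \<in> {..<2 * m}. ?f v = k} = (if k = 0 then {u} else if k = 1 then {0}
      else if k = 2 then {m..<2 * m} - {u} else if k = m then {1..<m} else {})"
      using assms by auto
    then have "card {v \<in> {..<2 * m}. ?f v = k} =
      (if k = 0 then 1 else if k = 1 then 1 else if k = 2 then m - 1 else if k = m then m - 1 else 0)"
      using assms by simp
    also have "\<dots> = ?L ! k" using assms k by (auto simp: nth_append nth_Cons')
    finally show "card {v \<in> {..<2 * m}. ?f v = k} = ?L ! k" .
  qed (use assms in auto)
  finally show ?thesis .
qed

section \<open>The power graph of G(n)\<close>

lemma padj_eq_pendant_clique_adj: "n \<ge> 2 \<Longrightarrow> padj n = pendant_clique_adj (mm n)"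
  by (intro ext) (auto simp: padj_iff Gn_eq Pn_eq pendant_clique_adj_def)

lemma path_lens_eq_pendant_clique_lengths:
  assumes "n \<ge> 2"
  shows "path_lens n = pendant_clique_lengths (mm n)"
proof -
  have "is_path n xs \<longleftrightarrow> pendant_clique_path (mm n) xs" for xs
    using assms unfolding is_path_def simple_path_def
    by (simp add: padj_eq_pendant_clique_adj Gn_eq successively_conv_nth)
  then show ?thesis unfolding path_lens_def path_lengths_def by simp
qed

lemma dds_eq_histogram:
  "n \<ge> 2 \<Longrightarrow> dds n u = histogram (\<lambda>v. Min (pendant_clique_lengths (mm n) u v)) {..<2 * mm n}"
  unfolding dds_def deg_k_def ecc_def gdist_def histogram_def
  by (simp add: path_lens_eq_pendant_clique_lengths Gn_eq)

lemma dds_D_eq_histogram: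
  "n \<ge> 2 \<Longrightarrow> dds_D n u = histogram (\<lambda>v. Max (pendant_clique_lengths (mm n) u v)) {..<2 * mm n}"
  unfolding dds_D_def Deg_k_def ecc_D_def ddist_def histogram_def
  by (simp add: path_lens_eq_pendant_clique_lengths Gn_eq)

theorem mainTheorem11:
  fixes n :: nat
  assumes "n \<ge> 3"
  defines "N \<equiv> 2 ^ (n - 1)"
  shows "dds n 0 = [1, 2 ^ n - 1]
    \<and> (\<forall>u \<in> Pn n - {0}. dds n u = [1, N - 1, N])
    \<and> (\<forall>u \<in> Hn n. dds n u = [1, 1, 2 ^ n - 2])
    \<and> dds_D n 0 = [1, N] @ replicate (N - 3) 0 @ [N - 1]
    \<and> (\<forall>u \<in> Pn n - {0}. dds_D n u = [1] @ replicate (N - 2) 0 @ [N - 1, N])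
    \<and> (\<forall>u \<in> Hn n. dds_D n u = [1, 1, N - 1] @ replicate (N - 3) 0 @ [N - 1])"
proof -
  define m where "m = mm n"
  have n: "n \<ge> 2" "n \<ge> 1" using assms(1) by simp_all
  have m: "3 \<le> m" "N = m" "2 ^ n = 2 * m"
    using mm_ge_4[OF assms(1)] power_two_eq_double_mm[OF n(2)] unfolding m_def N_def mm_def by simp_all
  have P: "0 < u \<and> u < m" if "u \<in> Pn n - {0}" for u using that by (auto simp: Pn_eq m_def)
  have H: "m \<le> u \<and> u < 2 * m" if "u \<in> Hn n" for u using that n by (simp add: Hn_eq m_def)
  show ?thesis
    unfolding dds_eq_histogram[OF n(1)] dds_D_eq_histogram[OF n(1)] m_def[symmetric] m(2,3)
    using m(1) by (auto dest!: P H simp: histogram_Min_pendant_clique_hub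
      histogram_Min_pendant_clique_clique histogram_Min_pendant_clique_pendant
      histogram_Max_pendant_clique_hub histogram_Max_pendant_clique_clique
      histogram_Max_pendant_clique_pendant)
qed

end
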